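(* Let $(X,d)$ be a metric space. Then every isometric embedding $f\colon X\to X$ (a not necessarily surjective distance-preserving map) has the same coarse entropy; that is, $h_\infty(f)=h_\infty(\mathrm{id}_X)$ for every isometric embedding $f\colon X\to X$.
   Context: Let $(X,d)$ be a metric space and $f\colon X\to X$ a map. For $\delta>0$, $n\in\mathbb N$ and $x_0\in X$, a $\delta$-pseudoorbit of $f$ of length $n$ starting at $x_0$ is a sequence $(x_0,x_1,\dots,x_n)$ of points of $X$ with $d(f(x_i),x_{i+1})\le\delta$ for $i=0,\dots,n-1$. Let $P(f,n,\delta,x_0)$ be the set of all such sequences, with the distance between $(x_i)$ and $(y_i)$ given by $\max_{0\le i\le n}d(x_i,y_i)$. A set is $R$-separated if any two distinct elements are at distance at least $R$. Let $s(f,n,R,\delta,x_0)$ be the supremum of cardinalities of $R$-separated subsets of $P(f,n,\delta,x_0)$. The coarse entropy of $f$ is $h_\infty(f)=\lim_{\delta\to\infty}\lim_{R\to\infty}\limsup_{n\to\infty}\frac1n\log s(f,n,R,\delta,x_0)\in[0,\infty]$, which does not depend on $x_0$. *)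

theory Defs
  imports "HOL-Analysis.Analysis" "HOL-Library.Liminf_Limsup"
begin

definition pseudo_orbits :: "('a::metric_space \<Rightarrow> 'a) \<Rightarrow> nat \<Rightarrow> real \<Rightarrow> 'a \<Rightarrow> 'a list set" where
  "pseudo_orbits f n \<delta> x0 =
     {xs. length xs = Suc n \<and> xs ! 0 = x0 \<and> (\<forall>i<n. dist (f (xs ! i)) (xs ! Suc i) \<le> \<delta>)}"

definition seq_dist :: "nat \<Rightarrow> 'a::metric_space list \<Rightarrow> 'a list \<Rightarrow> real" where
  "seq_dist n xs ys = Max ((\<lambda>i. dist (xs ! i) (ys ! i)) ` {0..n})"

definition separated :: "nat \<Rightarrow> real \<Rightarrow> 'a::metric_space list set \<Rightarrow> bool" where
  "separated n R S \<longleftrightarrow> (\<forall>xs\<in>S. \<forall>ys\<in>S. xs \<noteq> ys \<longrightarrow> seq_dist n xs ys \<ge> R)"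

definition sep_number :: "('a::metric_space \<Rightarrow> 'a) \<Rightarrow> nat \<Rightarrow> real \<Rightarrow> real \<Rightarrow> 'a \<Rightarrow> ereal" where
  "sep_number f n R \<delta> x0 =
     (SUP S \<in> {S. finite S \<and> S \<subseteq> pseudo_orbits f n \<delta> x0 \<and> separated n R S}. ereal (real (card S)))"

definition elog :: "ereal \<Rightarrow> ereal" where
  "elog s = (if s = \<infinity> then \<infinity> else ereal (ln (real_of_ereal s)))"

definition coarse_entropy :: "('a::metric_space \<Rightarrow> 'a) \<Rightarrow> 'a \<Rightarrow> ereal" where
  "coarse_entropy f x0 =
     Lim at_top (\<lambda>\<delta>::real. Lim at_top (\<lambda>R::real.
        limsup (\<lambda>n. ereal (1 / real n) * elog (sep_number f n R \<delta> x0))))"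

end

theory Submission
  imports Defs
begin

text \<open>Both inequalities come from maps between sets of pseudo-orbits that do not decrease the
  sup-distance, hence send separated sets injectively to separated sets. A \<open>\<delta>\<close>-chain
  \<open>x_0, ..., x_n\<close> of the identity gives the \<open>\<delta>\<close>-pseudo-orbit \<open>(f^i x_i)\<close> of \<open>f\<close>.
  Conversely, a \<open>\<delta>\<close>-pseudo-orbit \<open>y_0, ..., y_n\<close> of \<open>f\<close> gives the \<open>\<delta>\<close>-chain \<open>(f^(n-i) y_i)\<close>,
  which starts at \<open>f^n x_0\<close> rather than \<open>x_0\<close>; prefixing the chain
  \<open>x_0, f^k x_0, f^(2k) x_0, ..., f^n x_0\<close>, whose steps are at most \<open>k d(x_0, f x_0) \<le> \<delta>\<close>,
  lengthens it only by the factor \<open>1 + 2/k\<close>. As \<open>\<delta>\<close> tends to infinity, \<open>k\<close> may be taken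
  arbitrarily large.\<close>

lemma dist_le_seq_dist:
  assumes "i \<le> n" shows "dist (xs ! i) (ys ! i) \<le> seq_dist n xs ys"
  unfolding seq_dist_def using assms by (intro Max_ge) auto

lemma seq_dist_le:
  assumes "\<And>i. i \<le> n \<Longrightarrow> dist (xs ! i) (ys ! i) \<le> t" shows "seq_dist n xs ys \<le> t"
  unfolding seq_dist_def using assms by (subst Max_le_iff) auto

lemma dist_le_seq_dist_map_upt:
  assumes "i \<le> m"
  shows "dist (g i) (h i) \<le> seq_dist m (map g [0..<Suc m]) (map h [0..<Suc m])"
  using dist_le_seq_dist[OF assms, of "map g [0..<Suc m]" "map h [0..<Suc m]"] assms
  by (simp del: upt_Suc)

lemma seq_dist_self: "seq_dist n xs xs = 0"
  unfolding seq_dist_def by (simp add: image_constant_conv)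

lemma seq_dist_nonpos_imp_eq:
  assumes "length xs = Suc n" "length ys = Suc n" "seq_dist n xs ys \<le> 0"
  shows "xs = ys"
proof (rule nth_equalityI)
  fix i assume "i < length xs"
  hence "i \<le> n" using assms(1) by simp
  hence "dist (xs ! i) (ys ! i) \<le> 0"
    using dist_le_seq_dist[of i n xs ys] assms(3) by linarith
  thus "xs ! i = ys ! i" by simp
qed (use assms in simp)

lemma map_upt_mem_pseudo_orbits:
  "map h [0..<Suc m] \<in> pseudo_orbits f m \<delta> x0 \<longleftrightarrow>
     h 0 = x0 \<and> (\<forall>j<m. dist (f (h j)) (h (Suc j)) \<le> \<delta>)"
  unfolding pseudo_orbits_def by (auto simp del: upt_Suc)

lemma pseudo_orbits_mono: "\<delta> \<le> \<delta>' \<Longrightarrow> pseudo_orbits f n \<delta> x0 \<subseteq> pseudo_orbits f n \<delta>' x0"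
  unfolding pseudo_orbits_def by force

definition separation_number :: "'a::metric_space list set \<Rightarrow> nat \<Rightarrow> real \<Rightarrow> ereal" where
  "separation_number P n R =
     (SUP S \<in> {S. finite S \<and> S \<subseteq> P \<and> separated n R S}. ereal (real (card S)))"

lemma sep_number_eq_separation_number:
  "sep_number f n R \<delta> x0 = separation_number (pseudo_orbits f n \<delta> x0) n R"
  unfolding sep_number_def separation_number_def ..

lemma separation_number_le_of_expanding_map:
  assumes maps_to: "\<And>xs. xs \<in> P \<Longrightarrow> \<Phi> xs \<in> Q"
    and length: "\<And>xs. xs \<in> P \<Longrightarrow> length xs = Suc n"
    and expanding: "\<And>xs ys. xs \<in> P \<Longrightarrow> ys \<in> P \<Longrightarrow> seq_dist n xs ys \<le> seq_dist n' (\<Phi> xs) (\<Phi> ys)"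
  shows "separation_number P n R \<le> separation_number Q n' R"
  unfolding separation_number_def
proof (rule SUP_mono)
  fix S assume S: "S \<in> {S. finite S \<and> S \<subseteq> P \<and> separated n R S}"
  hence SP: "S \<subseteq> P" by blast
  have "inj_on \<Phi> S"
  proof (rule inj_onI)
    fix xs ys assume xs: "xs \<in> S" and ys: "ys \<in> S" and "\<Phi> xs = \<Phi> ys"
    hence "seq_dist n xs ys \<le> 0"
      using expanding[of xs ys] SP by (simp add: seq_dist_self subset_iff)
    thus "xs = ys" using seq_dist_nonpos_imp_eq length xs ys SP by blast
  qed
  moreover have "separated n' R (\<Phi> ` S)"
    unfolding separated_def
  proof (intro ballI impI)
    fix a b assume "a \<in> \<Phi> ` S" "b \<in> \<Phi> ` S" "a \<noteq> b"
    then obtain xs ys where "xs \<in> S" "ys \<in> S" "xs \<noteq> ys" "a = \<Phi> xs" "b = \<Phi> ys"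
      by blast
    thus "R \<le> seq_dist n' a b"
      using S expanding[of xs ys] unfolding separated_def by fastforce
  qed
  ultimately show "\<exists>S'\<in>{S. finite S \<and> S \<subseteq> Q \<and> separated n' R S}.
                     ereal (real (card S)) \<le> ereal (real (card S'))"
    using S maps_to by (intro bexI[of _ "\<Phi> ` S"]) (auto simp: card_image)
qed

lemma separation_number_antimono:
  "R \<le> R' \<Longrightarrow> separation_number P n R' \<le> separation_number P n R"
  unfolding separation_number_def
  by (rule SUP_subset_mono) (auto simp: separated_def intro: order_trans)

lemma separation_number_mono: "P \<subseteq> P' \<Longrightarrow> separation_number P n R \<le> separation_number P' n R"
  unfolding separation_number_def by (rule SUP_subset_mono) auto

lemma separation_number_zero_or_ge_one:
  "separation_number P n R = 0 \<or> 1 \<le> separation_number P n R"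
proof (cases "\<exists>S\<in>{S. finite S \<and> S \<subseteq> P \<and> separated n R S}. S \<noteq> {}")
  case True
  then obtain S where S: "S \<in> {S. finite S \<and> S \<subseteq> P \<and> separated n R S}" "S \<noteq> {}"
    by blast
  hence "(1::ereal) \<le> ereal (real (card S))" by (simp add: Suc_leI card_gt_0_iff)
  also have "\<dots> \<le> separation_number P n R"
    unfolding separation_number_def using S(1) by (rule SUP_upper)
  finally show ?thesis by simp
next
  case False
  hence "separation_number P n R \<le> 0" unfolding separation_number_def by (intro SUP_least) auto
  moreover have "0 \<le> separation_number P n R"
    unfolding separation_number_def by (rule SUP_upper2[of "{}"]) (auto simp: separated_def)
  ultimately show ?thesis by simp
qed

text \<open>Since \<open>ln 0 = 0\<close> in Isabelle, \<open>elog 0 = 0\<close>.\<close>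

lemma elog_nonneg: "s = 0 \<or> 1 \<le> s \<Longrightarrow> 0 \<le> elog s"
  unfolding elog_def by (cases s) auto

lemma elog_mono:
  assumes "s = 0 \<or> 1 \<le> s" "t = 0 \<or> 1 \<le> t" "s \<le> t"
  shows "elog s \<le> elog t"
  using assms elog_nonneg[OF assms(2)] unfolding elog_def
  by (cases s; cases t) auto

lemma elog_separation_number_mono:
  "separation_number P n R \<le> separation_number P' n' R' \<Longrightarrow>
     elog (separation_number P n R) \<le> elog (separation_number P' n' R')"
  by (intro elog_mono separation_number_zero_or_ge_one)

lemma Lim_at_top_mono:
  fixes g :: "real \<Rightarrow> 'b::{complete_linorder, linorder_topology}"
  assumes "mono g"
  shows "Lim at_top g = (SUP x. g x)"
proof (rule tendsto_Lim)
  show "(g \<longlongrightarrow> (SUP x. g x)) at_top"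
  proof (rule order_tendstoI)
    fix a assume "a < (SUP x. g x)"
    then obtain x where "a < g x" by (auto simp: less_SUP_iff)
    thus "\<forall>\<^sub>F y in at_top. a < g y"
      unfolding eventually_at_top_linorder using assms by (meson monoD less_le_trans)
  next
    fix a assume "(SUP x. g x) < a"
    thus "\<forall>\<^sub>F x in at_top. g x < a" by (simp add: SUP_lessD)
  qed
qed simp

lemma Lim_at_top_antimono:
  fixes g :: "real \<Rightarrow> 'b::{complete_linorder, linorder_topology}"
  assumes "antimono g"
  shows "Lim at_top g = (INF x. g x)"
proof (rule tendsto_Lim)
  show "(g \<longlongrightarrow> (INF x. g x)) at_top"
  proof (rule order_tendstoI)
    fix a assume "a < (INF x. g x)"
    thus "\<forall>\<^sub>F x in at_top. a < g x" by (simp add: less_INF_D)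
  next
    fix a assume "(INF x. g x) < a"
    then obtain x where "g x < a" by (auto simp: INF_less_iff)
    thus "\<forall>\<^sub>F y in at_top. g y < a"
      unfolding eventually_at_top_linorder using assms by (metis antimonoD order.strict_trans1)
  qed
qed simp

definition separation_growth :: "('a::metric_space \<Rightarrow> 'a) \<Rightarrow> 'a \<Rightarrow> real \<Rightarrow> real \<Rightarrow> ereal" where
  "separation_growth f x0 \<delta> R = limsup (\<lambda>n. ereal (1 / real n) * elog (sep_number f n R \<delta> x0))"

lemma separation_growth_mono:
  assumes "\<And>n. sep_number f n R \<delta> x0 \<le> sep_number g n R' \<delta>' x0"
  shows "separation_growth f x0 \<delta> R \<le> separation_growth g x0 \<delta>' R'"
  unfolding separation_growth_def
  using assms unfolding sep_number_eq_separation_number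
  by (intro Limsup_mono always_eventually allI ereal_mult_left_mono elog_separation_number_mono)
    auto

lemma coarse_entropy_eq_SUP_INF:
  "coarse_entropy f x0 = (SUP \<delta>. INF R. separation_growth f x0 \<delta> R)"
proof -
  have "Lim at_top (separation_growth f x0 \<delta>) = (INF R. separation_growth f x0 \<delta> R)" for \<delta>
    by (intro Lim_at_top_antimono antimonoI separation_growth_mono)
      (simp add: sep_number_eq_separation_number separation_number_antimono)
  moreover have "mono (\<lambda>\<delta>. INF R. separation_growth f x0 \<delta> R)"
    by (intro monoI INF_mono' separation_growth_mono)
      (simp add: sep_number_eq_separation_number separation_number_mono pseudo_orbits_mono)
  ultimately show ?thesis
    unfolding coarse_entropy_def separation_growth_def[symmetric]
    by (simp add: Lim_at_top_mono)
qed

lemma funpow_isometry: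
  fixes f :: "'a::metric_space \<Rightarrow> 'a"
  assumes "\<forall>x y. dist (f x) (f y) = dist x y"
  shows "dist ((f ^^ i) x) ((f ^^ i) y) = dist x y"
  by (induction i) (simp_all add: assms)

lemma dist_funpow_le:
  fixes f :: "'a::metric_space \<Rightarrow> 'a"
  assumes iso: "\<forall>x y. dist (f x) (f y) = dist x y" and "a \<le> b"
  shows "dist ((f ^^ a) x) ((f ^^ b) x) \<le> real (b - a) * dist x (f x)"
proof -
  have "dist x ((f ^^ m) x) \<le> real m * dist x (f x)" for m
  proof (induction m)
    case (Suc m)
    have "dist x ((f ^^ Suc m) x) \<le> dist x (f x) + dist (f x) (f ((f ^^ m) x))"
      by (simp add: dist_triangle)
    also have "dist (f x) (f ((f ^^ m) x)) = dist x ((f ^^ m) x)" using iso by blast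
    finally show ?case using Suc by (simp add: algebra_simps)
  qed simp
  moreover have "(f ^^ b) x = (f ^^ a) ((f ^^ (b - a)) x)"
    using \<open>a \<le> b\<close> by (metis funpow_add le_add_diff_inverse o_apply)
  ultimately show ?thesis by (simp add: funpow_isometry[OF iso])
qed

lemma sep_number_id_le:
  fixes f :: "'a::metric_space \<Rightarrow> 'a"
  assumes iso: "\<forall>x y. dist (f x) (f y) = dist x y"
  shows "sep_number id n R \<delta> x0 \<le> sep_number f n R \<delta> x0"
  unfolding sep_number_eq_separation_number
proof (rule separation_number_le_of_expanding_map[where \<Phi> = "\<lambda>xs. map (\<lambda>i. (f ^^ i) (xs ! i)) [0..<Suc n]"])
  fix xs assume xs: "xs \<in> pseudo_orbits id n \<delta> x0"
  thus "length xs = Suc n" by (simp add: pseudo_orbits_def)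
  have "dist (f ((f ^^ i) (xs ! i))) ((f ^^ Suc i) (xs ! Suc i)) \<le> \<delta>" if "i < n" for i
  proof -
    have "dist (f ((f ^^ i) (xs ! i))) ((f ^^ Suc i) (xs ! Suc i)) = dist (xs ! i) (xs ! Suc i)"
      using funpow_isometry[OF iso, of "Suc i" "xs ! i"] by (simp only: funpow_Suc_right o_apply funpow_swap1)
    thus ?thesis using xs that by (simp add: pseudo_orbits_def)
  qed
  thus "map (\<lambda>i. (f ^^ i) (xs ! i)) [0..<Suc n] \<in> pseudo_orbits f n \<delta> x0"
    using xs by (simp add: map_upt_mem_pseudo_orbits pseudo_orbits_def del: upt_Suc)
next
  fix xs ys
  show "seq_dist n xs ys \<le> seq_dist n (map (\<lambda>i. (f ^^ i) (xs ! i)) [0..<Suc n])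
                                       (map (\<lambda>i. (f ^^ i) (ys ! i)) [0..<Suc n])"
  proof (rule seq_dist_le)
    fix i assume "i \<le> n"
    from dist_le_seq_dist_map_upt[OF this, of "\<lambda>i. (f ^^ i) (xs ! i)" "\<lambda>i. (f ^^ i) (ys ! i)"]
    show "dist (xs ! i) (ys ! i) \<le> seq_dist n (map (\<lambda>i. (f ^^ i) (xs ! i)) [0..<Suc n])
                                       (map (\<lambda>i. (f ^^ i) (ys ! i)) [0..<Suc n])"
      by (simp only: funpow_isometry[OF iso])
  qed
qed

lemma coarse_entropy_id_le:
  fixes f :: "'a::metric_space \<Rightarrow> 'a"
  assumes "\<forall>x y. dist (f x) (f y) = dist x y"
  shows "coarse_entropy id x0 \<le> coarse_entropy f x0"
  unfolding coarse_entropy_eq_SUP_INF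
  by (intro SUP_mono' INF_mono' separation_growth_mono sep_number_id_le assms)

lemma dist_funpow_min_step_le:
  fixes f :: "'a::metric_space \<Rightarrow> 'a"
  assumes "\<forall>x y. dist (f x) (f y) = dist x y"
  shows "dist ((f ^^ min a n) x) ((f ^^ min (a + k) n) x) \<le> real k * dist x (f x)"
proof -
  have "dist ((f ^^ min a n) x) ((f ^^ min (a + k) n) x)
          \<le> real (min (a + k) n - min a n) * dist x (f x)"
    by (rule dist_funpow_le[OF assms]) simp
  also have "\<dots> \<le> real k * dist x (f x)"
    by (intro mult_right_mono) auto
  finally show ?thesis .
qed

lemma dist_funpow_diff_Suc:
  fixes f :: "'a::metric_space \<Rightarrow> 'a"
  assumes "\<forall>x y. dist (f x) (f y) = dist x y" and "i < n"
  shows "dist ((f ^^ (n - i)) y) ((f ^^ (n - Suc i)) z) = dist (f y) z"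
proof -
  have "(f ^^ (n - i)) y = (f ^^ (n - Suc i)) (f y)"
    using \<open>i < n\<close> by (metis Suc_diff_Suc funpow_simps_right(2) o_apply)
  thus ?thesis by (simp add: funpow_isometry[OF assms(1)])
qed

lemma sep_number_le_sep_number_id:
  fixes f :: "'a::metric_space \<Rightarrow> 'a"
  assumes iso: "\<forall>x y. dist (f x) (f y) = dist x y"
    and k: "1 \<le> k" and k_step: "real k * dist x0 (f x0) \<le> \<delta>"
  shows "sep_number f n R \<delta> x0 \<le> sep_number id (n + (n div k + 1)) R \<delta> x0"
proof -
  define q where "q = n div k + 1"
  define p where "p j = (f ^^ min (j * k) n) x0" for j
  define g where "g ys j = (if j < q then p j else (f ^^ (n - (j - q))) (ys ! (j - q)))" for ys j
  have p_step: "dist (p j) (p (Suc j)) \<le> \<delta>" for j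
    using dist_funpow_min_step_le[OF iso, of "j * k" n x0 k] k_step
    unfolding p_def by (simp add: add.commute)
  have "n mod k < k" using k by simp
  moreover have "q * k = n div k * k + k" unfolding q_def by simp
  ultimately have "n \<le> q * k" using div_mult_mod_eq[of n k] by linarith
  hence p_q: "p q = (f ^^ n) x0" unfolding p_def by simp
  have "separation_number (pseudo_orbits f n \<delta> x0) n R
          \<le> separation_number (pseudo_orbits id (n + q) \<delta> x0) (n + q) R"
  proof (rule separation_number_le_of_expanding_map[where \<Phi> = "\<lambda>ys. map (g ys) [0..<Suc (n + q)]"])
    fix ys assume ys: "ys \<in> pseudo_orbits f n \<delta> x0"
    thus "length ys = Suc n" by (simp add: pseudo_orbits_def)
    have g_step: "dist (g ys j) (g ys (Suc j)) \<le> \<delta>" if "j < n + q" for j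
    proof (cases "j < q")
      case True
      have "g ys (Suc j) = p (Suc j)"
        using True ys p_q by (cases "Suc j = q") (auto simp: g_def pseudo_orbits_def)
      thus ?thesis using True p_step by (simp add: g_def)
    next
      case False
      define i where "i = j - q"
      have "i < n" using that False unfolding i_def by linarith
      have "dist (g ys j) (g ys (Suc j)) = dist (f (ys ! i)) (ys ! Suc i)"
        using False dist_funpow_diff_Suc[OF iso \<open>i < n\<close>]
        by (simp add: g_def i_def Suc_diff_le)
      also have "\<dots> \<le> \<delta>" using ys \<open>i < n\<close> by (simp add: pseudo_orbits_def)
      finally show ?thesis .
    qed
    moreover have "g ys 0 = x0" by (simp add: g_def p_def q_def)
    ultimately show "map (g ys) [0..<Suc (n + q)] \<in> pseudo_orbits id (n + q) \<delta> x0"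
      by (simp add: map_upt_mem_pseudo_orbits del: upt_Suc)
  next
    fix xs ys
    show "seq_dist n xs ys \<le> seq_dist (n + q) (map (g xs) [0..<Suc (n + q)]) (map (g ys) [0..<Suc (n + q)])"
    proof (rule seq_dist_le)
      fix i assume "i \<le> n"
      hence "dist (g xs (q + i)) (g ys (q + i))
               \<le> seq_dist (n + q) (map (g xs) [0..<Suc (n + q)]) (map (g ys) [0..<Suc (n + q)])"
        by (intro dist_le_seq_dist_map_upt) simp
      thus "dist (xs ! i) (ys ! i)
              \<le> seq_dist (n + q) (map (g xs) [0..<Suc (n + q)]) (map (g ys) [0..<Suc (n + q)])"
        by (simp add: g_def funpow_isometry[OF iso])
    qed
  qed
  thus ?thesis unfolding sep_number_eq_separation_number q_def .
qed

lemma INF_ereal_mult_left: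
  assumes "0 < c"
  shows "(INF i\<in>I. ereal c * f i) = ereal c * (INF i\<in>I. f i)"
proof (cases "I = {}")
  case False
  have "ereal c * Inf (f ` I) = Inf ((\<lambda>x. ereal c * x) ` f ` I)"
  proof (rule continuous_at_Inf_mono)
    show "mono (\<lambda>x. ereal c * x)" using assms by (intro monoI ereal_mult_left_mono) auto
    show "continuous (at_right (Inf (f ` I))) (\<lambda>x. ereal c * x)"
      unfolding continuous_within by (intro tendsto_cmult_ereal tendsto_ident_at) simp
  qed (use False in auto)
  thus ?thesis by (simp add: image_comp)
qed (use assms in \<open>simp add: top_ereal_def\<close>)

lemma length_ratio_le:
  fixes n k :: nat
  assumes "1 \<le> k" "k \<le> n"
  shows "real (n + (n div k + 1)) / real n \<le> 1 + 2 / real k"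
proof -
  have "real (n div k) * real k \<le> real n"
    by (metis div_times_less_eq_dividend of_nat_le_iff of_nat_mult)
  hence "real (n div k) \<le> real n / real k"
    using assms(1) by (simp add: pos_le_divide_eq)
  moreover have "1 \<le> real n / real k" using assms by simp
  ultimately have "real (n + (n div k + 1)) \<le> real n + real n / real k + real n / real k"
    by simp
  also have "\<dots> = real n * (1 + 2 / real k)" by (simp add: field_simps)
  finally have "real (n + (n div k + 1)) \<le> real n * (1 + 2 / real k)" .
  thus ?thesis using assms by (simp add: divide_le_eq mult.commute)
qed

lemma separation_growth_le_scaled:
  fixes f :: "'a::metric_space \<Rightarrow> 'a"
  assumes iso: "\<forall>x y. dist (f x) (f y) = dist x y"
    and k: "1 \<le> k" and k_step: "real k * dist x0 (f x0) \<le> \<delta>"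
  shows "separation_growth f x0 \<delta> R \<le> ereal (1 + 2 / real k) * separation_growth id x0 \<delta> R"
proof -
  define G where "G n = n + (n div k + 1)" for n
  define b where "b m = ereal (1 / real m) * elog (sep_number id m R \<delta> x0)" for m
  define C where "C = 1 + 2 / real k"
  have "strict_mono G"
    unfolding G_def by (rule strict_monoI_Suc) (simp add: div_le_mono le_imp_less_Suc)
  have b_nonneg: "0 \<le> b m" for m
    unfolding b_def sep_number_eq_separation_number
    by (simp add: elog_nonneg separation_number_zero_or_ge_one)
  have "ereal (1 / real n) * elog (sep_number f n R \<delta> x0) \<le> ereal C * b (G n)" if "k \<le> n" for n
  proof -
    have "ereal (1 / real n) * elog (sep_number f n R \<delta> x0)
            \<le> ereal (1 / real n) * elog (sep_number id (G n) R \<delta> x0)"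
      using sep_number_le_sep_number_id[OF iso k k_step]
      unfolding G_def sep_number_eq_separation_number
      by (intro ereal_mult_left_mono elog_separation_number_mono) auto
    also have "\<dots> = ereal (real (G n) / real n) * b (G n)"
      unfolding b_def G_def by (simp flip: mult.assoc)
    also have "\<dots> \<le> ereal C * b (G n)"
      using length_ratio_le[OF k that] b_nonneg unfolding C_def G_def
      by (intro ereal_mult_right_mono) auto
    finally show ?thesis .
  qed
  hence "separation_growth f x0 \<delta> R \<le> limsup (\<lambda>n. ereal C * b (G n))"
    unfolding separation_growth_def by (intro Limsup_mono) (auto simp: eventually_sequentially)
  also have "\<dots> = ereal C * limsup (b \<circ> G)"
    unfolding C_def by (subst Limsup_ereal_mult_left) (auto simp: comp_def)
  also have "\<dots> \<le> ereal C * limsup b"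
    unfolding C_def by (intro ereal_mult_left_mono limsup_subseq_mono \<open>strict_mono G\<close>) auto
  finally show ?thesis unfolding separation_growth_def b_def C_def .
qed

lemma coarse_entropy_le_scaled:
  fixes f :: "'a::metric_space \<Rightarrow> 'a"
  assumes iso: "\<forall>x y. dist (f x) (f y) = dist x y" and k: "1 \<le> k"
  shows "coarse_entropy f x0 \<le> ereal (1 + 2 / real k) * coarse_entropy id x0"
  unfolding coarse_entropy_eq_SUP_INF
proof (rule SUP_least)
  fix \<delta>
  define C where "C = 1 + 2 / real k"
  define \<delta>' where "\<delta>' = max \<delta> (real k * dist x0 (f x0))"
  have "C > 0" unfolding C_def by (simp add: add_pos_nonneg)
  have "(INF R. separation_growth f x0 \<delta> R) \<le> (INF R. separation_growth f x0 \<delta>' R)"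
    by (intro INF_mono' separation_growth_mono)
      (simp add: sep_number_eq_separation_number separation_number_mono pseudo_orbits_mono \<delta>'_def)
  also have "\<dots> \<le> (INF R. ereal C * separation_growth id x0 \<delta>' R)"
    unfolding C_def by (intro INF_mono' separation_growth_le_scaled[OF iso k]) (simp add: \<delta>'_def)
  also have "\<dots> = ereal C * (INF R. separation_growth id x0 \<delta>' R)"
    by (rule INF_ereal_mult_left[OF \<open>C > 0\<close>])
  also have "\<dots> \<le> ereal C * (SUP \<delta>. INF R. separation_growth id x0 \<delta> R)"
    using \<open>C > 0\<close> by (intro ereal_mult_left_mono SUP_upper) auto
  finally show "(INF R. separation_growth f x0 \<delta> R)
                  \<le> ereal (1 + 2 / real k) * (SUP \<delta>. INF R. separation_growth id x0 \<delta> R)"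
    unfolding C_def .
qed

lemma ereal_le_of_le_scaled:
  fixes x h :: ereal
  assumes "\<And>k. 1 \<le> k \<Longrightarrow> x \<le> ereal (1 + 2 / real k) * h"
  shows "x \<le> h"
proof -
  have "(\<lambda>k. ereal (1 + 2 / real k) * h) \<longlonglongrightarrow> ereal 1 * h"
    using tendsto_add[OF tendsto_const lim_const_over_n, of 1 2]
    by (intro tendsto_mult_ereal tendsto_const lim_ereal[THEN iffD2]) simp_all
  thus ?thesis using assms by (intro Lim_bounded2[where N = 1]) auto
qed

theorem mainTheorem1:
  fixes f :: "'a::metric_space \<Rightarrow> 'a" and x0 :: 'a
  assumes "\<forall>x y. dist (f x) (f y) = dist x y"
  shows "coarse_entropy f x0 = coarse_entropy id x0"
proof (rule antisym)
  show "coarse_entropy f x0 \<le> coarse_entropy id x0"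
    by (rule ereal_le_of_le_scaled) (rule coarse_entropy_le_scaled[OF assms])
  show "coarse_entropy id x0 \<le> coarse_entropy f x0"
    by (rule coarse_entropy_id_le[OF assms])
qed

end
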